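(* Let $F$ be a connected, compact, simple Lie group and $m\ge 2$. An $F^m$-invariant Riemannian metric on the Ledger--Obata space $F^m/\mathrm{diag}(F)$ is naturally reductive if and only if it is generated by a pair $(\mathfrak{p},(\cdot,\cdot))$ such that one of the following holds: (a) $\mathfrak{p}$ is an ideal of $\mathfrak{g}$ isomorphic to $(m-1)\mathfrak{f}$ (i.e. the direct sum of $m-1$ of the $m$ simple summands $\mathfrak f$ of $\mathfrak g$) and $(\cdot,\cdot)$ is an $\mathrm{ad}(\mathfrak{p})$-invariant inner product on it, so that $(\cdot,\cdot)=\sum_{i}\beta_i\langle\cdot,\cdot\rangle_i$, the sum running over the $m-1$ summands contained in $\mathfrak p$, with all $\beta_i>0$; or (b) there is an $\mathrm{ad}(\mathfrak{g})$-invariant quadratic form $Q=\sum_{i=1}^m\alpha_i\langle\cdot,\cdot\rangle_i$ on $\mathfrak{g}$ with all $\alpha_i\neq 0$, such that $\mathfrak{p}$ is the $Q$-orthogonal complement of $\mathfrak{h}=\mathrm{diag}(\mathfrak f)$ in $\mathfrak{g}$ and $(\cdot,\cdot)=Q|_{\mathfrak p}$, where either (i) $\alpha_i>0$ for all $i=1,\dots,m$, or (ii) there is $j\in\{1,\dots,m\}$ with $\alpha_j<0$, $\alpha_i>0$ for all $i\neq j$, and $S:=\sum_{i=1}^m\alpha_i<0$.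
   Context: $F$ is a connected compact simple Lie group with Lie algebra $\mathfrak f$; $G=F^m$, $H=\mathrm{diag}(F)=\{(x,\dots,x):x\in F\}$, $\mathfrak g=m\mathfrak f=\mathfrak f\oplus\cdots\oplus\mathfrak f$, $\mathfrak h=\mathrm{diag}(\mathfrak f)=\{(X,\dots,X):X\in\mathfrak f\}$. $\langle\cdot,\cdot\rangle$ denotes minus the Killing form of $\mathfrak g$ and $\langle\cdot,\cdot\rangle_i$ its restriction to the $i$-th copy of $\mathfrak f$ (extended by zero on the other summands). An $F^m$-invariant metric on $G/H$ corresponds to an $\mathrm{Ad}(H)$-invariant inner product $(\cdot,\cdot)$ on an $\mathrm{Ad}(H)$-invariant complement $\mathfrak p$ of $\mathfrak h$ in $\mathfrak g$ (identified with the tangent space at $eH$). Such a metric is naturally reductive if the $\mathrm{Ad}(H)$-invariant complement $\mathfrak p$ can be chosen so that $([X,Y]_{\mathfrak p},X)=0$ for all $X,Y\in\mathfrak p$, where $[X,Y]_{\mathfrak p}$ is the $\mathfrak p$-component with respect to $\mathfrak g=\mathfrak h\oplus\mathfrak p$; the metric is then said to be generated by the pair $(\mathfrak p,(\cdot,\cdot))$. *)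

theory Defs
  imports "HOL-Analysis.Analysis"
begin

definition lie_algebra :: "('a::real_vector \<Rightarrow> 'a \<Rightarrow> 'a) \<Rightarrow> bool" where
  "lie_algebra br \<longleftrightarrow> bilinear br \<and> (\<forall>x. br x x = 0) \<and>
     (\<forall>x y z. br x (br y z) + br y (br z x) + br z (br x y) = 0)"

definition lin_trace :: "('a::euclidean_space \<Rightarrow> 'a) \<Rightarrow> real" where
  "lin_trace T = (\<Sum>b\<in>Basis. T b \<bullet> b)"

definition killing :: "('a::euclidean_space \<Rightarrow> 'a \<Rightarrow> 'a) \<Rightarrow> 'a \<Rightarrow> 'a \<Rightarrow> real" where
  "killing br x y = lin_trace (\<lambda>z. br x (br y z))"

definition lie_ideal :: "('a::real_vector \<Rightarrow> 'a \<Rightarrow> 'a) \<Rightarrow> 'a set \<Rightarrow> bool" where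
  "lie_ideal br I \<longleftrightarrow> subspace I \<and> (\<forall>x y. y \<in> I \<longrightarrow> br x y \<in> I)"

definition simple_lie_algebra :: "('a::real_vector \<Rightarrow> 'a \<Rightarrow> 'a) \<Rightarrow> bool" where
  "simple_lie_algebra br \<longleftrightarrow> lie_algebra br \<and> (\<exists>x y. br x y \<noteq> 0) \<and>
     (\<forall>I. lie_ideal br I \<longrightarrow> I = {0} \<or> I = UNIV)"

text \<open>Compact (semisimple) Lie algebra: negative definite Killing form.\<close>
definition compact_lie_algebra :: "('a::euclidean_space \<Rightarrow> 'a \<Rightarrow> 'a) \<Rightarrow> bool" where
  "compact_lie_algebra br \<longleftrightarrow> lie_algebra br \<and> (\<forall>x. x \<noteq> 0 \<longrightarrow> killing br x x < 0)"

definition prod_br :: "('a \<Rightarrow> 'a \<Rightarrow> 'a) \<Rightarrow> 'a^'m \<Rightarrow> 'a^'m \<Rightarrow> 'a^'m" where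
  "prod_br br X Y = (\<chi> i. br (X $ i) (Y $ i))"

definition diag_sub :: "(('a::zero)^'m) set" where
  "diag_sub = {X. \<exists>x. X = (\<chi> i. x)}"

definition comp_part :: "'m \<Rightarrow> ('a::zero)^'m \<Rightarrow> 'a^'m" where
  "comp_part i X = (\<chi> k. if k = i then X $ i else 0)"

definition negkill :: "('a::euclidean_space \<Rightarrow> 'a \<Rightarrow> 'a) \<Rightarrow> 'a^'m::finite \<Rightarrow> 'a^'m \<Rightarrow> real" where
  "negkill br X Y = - killing (prod_br br) X Y"

definition negkill_i :: "('a::euclidean_space \<Rightarrow> 'a \<Rightarrow> 'a) \<Rightarrow> 'm::finite \<Rightarrow> 'a^'m \<Rightarrow> 'a^'m \<Rightarrow> real" where
  "negkill_i br i X Y = negkill br (comp_part i X) (comp_part i Y)"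

text \<open>A G-invariant metric on G/H, viewed as a symmetric bilinear form on g whose
  radical is exactly h, positive definite on g/h and Ad(H)-invariant (equivalently,
  since H is connected, ad(h)-invariant).\<close>
definition inv_metric :: "('a::euclidean_space \<Rightarrow> 'a \<Rightarrow> 'a) \<Rightarrow> ('a^'m::finite \<Rightarrow> 'a^'m \<Rightarrow> real) \<Rightarrow> bool" where
  "inv_metric br M \<longleftrightarrow> bilinear M \<and> (\<forall>X Y. M X Y = M Y X) \<and>
     (\<forall>X\<in>diag_sub. \<forall>Y. M X Y = 0) \<and> (\<forall>X. X \<notin> diag_sub \<longrightarrow> M X X > 0) \<and>
     (\<forall>Z\<in>diag_sub. \<forall>X Y. M (prod_br br Z X) Y + M X (prod_br br Z Y) = 0)"

definition reductive_compl :: "('a::euclidean_space \<Rightarrow> 'a \<Rightarrow> 'a) \<Rightarrow> ('a^'m::finite) set \<Rightarrow> bool" where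
  "reductive_compl br p \<longleftrightarrow> subspace p \<and> p \<inter> diag_sub = {0} \<and>
     (\<forall>X. \<exists>A\<in>p. \<exists>B\<in>diag_sub. X = A + B) \<and>
     (\<forall>Z\<in>diag_sub. \<forall>X\<in>p. prod_br br Z X \<in> p)"

definition pcomp :: "(('a::euclidean_space)^('m::finite)) set \<Rightarrow> 'a^'m \<Rightarrow> 'a^'m" where
  "pcomp p X = (THE A. A \<in> p \<and> X - A \<in> diag_sub)"

text \<open>The metric M is generated by the pair (p, ip): p is an invariant complement of h
  and M corresponds to ip under the identification p = g/h.\<close>
definition generated_by :: "('a::euclidean_space \<Rightarrow> 'a \<Rightarrow> 'a) \<Rightarrow> ('a^'m::finite \<Rightarrow> 'a^'m \<Rightarrow> real)
     \<Rightarrow> ('a^'m) set \<Rightarrow> ('a^'m \<Rightarrow> 'a^'m \<Rightarrow> real) \<Rightarrow> bool" where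
  "generated_by br M p ip \<longleftrightarrow> reductive_compl br p \<and>
     (\<forall>X Y. M X Y = ip (pcomp p X) (pcomp p Y))"

definition naturally_reductive :: "('a::euclidean_space \<Rightarrow> 'a \<Rightarrow> 'a) \<Rightarrow> ('a^'m::finite \<Rightarrow> 'a^'m \<Rightarrow> real) \<Rightarrow> bool" where
  "naturally_reductive br M \<longleftrightarrow> (\<exists>p ip. generated_by br M p ip \<and>
     (\<forall>X\<in>p. \<forall>Y\<in>p. ip (pcomp p (prod_br br X Y)) X = 0))"

end

theory Submission
  imports Defs
begin

text \<open>
  By Schur's lemma for the compact simple algebra \<open>f\<close> (every \<open>ad\<close>-invariant bilinear form is a
  multiple of the Killing form), an invariant metric is block-scalar,
  \<open>M X Y = (\<Sum>i k. a i k * B (X$i) (Y$k))\<close>, where \<open>a\<close> is symmetric, has zero row sums (\<open>h\<close> lies in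
  the radical) and positive diagonal; likewise every invariant complement \<open>p\<close> of \<open>h\<close> has projection
  \<open>V - diag (\<Sum>i. c i *\<^sub>R V$i)\<close> with \<open>(\<Sum>i. c i) = 1\<close>. Testing natural reductivity on
  \<open>X = s\<otimes>x + t\<otimes>[x,z]\<close>, \<open>Y = r\<otimes>z\<close> gives \<open>(1 - c p) * a p q + c q * a p p = 0\<close> for \<open>p \<noteq> q\<close>.
  If some \<open>c j = 1\<close>, the other \<open>c q\<close> vanish, \<open>p\<close> is the ideal \<open>{X. X$j = 0}\<close> and \<open>a\<close> is diagonal on
  it. Otherwise \<open>a i k = \<mu> * (\<delta>\<^sub>i\<^sub>k * c i - c i * c k)\<close>, so \<open>p\<close> is the orthogonal complement of \<open>h\<close>
  for \<open>Q = (\<Sum>i. \<mu> * c i * B\<^sub>i)\<close> and \<open>M = Q\<close> on \<open>p\<close>; positivity of \<open>M\<close> on non-diagonal vectors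
  forces the signs of the weights \<open>\<mu> * c i\<close>. Conversely, both kinds of pairs satisfy
  \<open>([X,Y]\<^sub>p, X) = 0\<close> by \<open>ad\<close>-invariance of the Killing form.
\<close>

section \<open>The Killing form\<close>

lemma lin_trace_diff: "lin_trace (\<lambda>x. f x - g x) = lin_trace f - lin_trace g"
  by (simp add: lin_trace_def inner_diff_left sum_subtractf)

lemma lin_trace_commute:
  fixes S T :: "'a::euclidean_space \<Rightarrow> 'a"
  assumes "linear S" "linear T"
  shows "lin_trace (\<lambda>x. S (T x)) = lin_trace (\<lambda>x. T (S x))"
proof -
  have expand: "U (V b) \<bullet> b = (\<Sum>c\<in>Basis. (V b \<bullet> c) * (U c \<bullet> b))"
    if "linear U" for U V :: "'a \<Rightarrow> 'a" and b
  proof -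
    have "U (V b) = U (\<Sum>c\<in>Basis. (V b \<bullet> c) *\<^sub>R c)" by (simp add: euclidean_representation)
    also have "\<dots> = (\<Sum>c\<in>Basis. (V b \<bullet> c) *\<^sub>R U c)"
      using that by (simp add: linear_sum linear_scale)
    finally show ?thesis by (simp add: inner_sum_left)
  qed
  show ?thesis
    unfolding lin_trace_def expand[OF assms(1), of T] expand[OF assms(2), of S]
    by (subst sum.swap) (simp add: mult.commute)
qed

lemma prod_br_nth [simp]: "prod_br br X Y $ i = br (X $ i) (Y $ i)"
  by (simp add: prod_br_def)

locale lie_alg =
  fixes br :: "'a::euclidean_space \<Rightarrow> 'a \<Rightarrow> 'a"
  assumes lie_algebra: "lie_algebra br"
begin

lemma bilinear_br: "bilinear br"
  using lie_algebra by (simp add: lie_algebra_def)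

lemma br_self [simp]: "br x x = 0"
  using lie_algebra by (simp add: lie_algebra_def)

lemma jacobi: "br x (br y z) + br y (br z x) + br z (br x y) = 0"
  using lie_algebra by (simp add: lie_algebra_def)

lemma linear_br_right: "linear (br x)"
  using bilinear_br by (simp add: bilinear_def)

lemma br_zero_right [simp]: "br x 0 = 0" using bilinear_br by (simp add: bilinear_rzero)
lemma br_add_right: "br x (y + z) = br x y + br x z" using bilinear_br by (simp add: bilinear_radd)
lemma br_add_left: "br (x + y) z = br x z + br y z" using bilinear_br by (simp add: bilinear_ladd)
lemma br_diff_right: "br x (y - z) = br x y - br x z" using bilinear_br by (simp add: bilinear_rsub)
lemma br_scale_right: "br x (c *\<^sub>R y) = c *\<^sub>R br x y" using bilinear_br by (simp add: bilinear_rmul)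
lemma br_scale_left: "br (c *\<^sub>R x) y = c *\<^sub>R br x y" using bilinear_br by (simp add: bilinear_lmul)
lemma br_sum_right: "br x (sum f S) = (\<Sum>i\<in>S. br x (f i))"
  using linear_br_right[of x] by (simp add: linear_sum)

lemma killing_prod_br:
  fixes X Y :: "'a::euclidean_space^'m::finite"
  shows "killing (prod_br br) X Y = (\<Sum>i\<in>UNIV. killing br (X$i) (Y$i))"
proof -
  have basis: "(Basis :: ('a^'m) set) = (\<lambda>(i,u). axis i u) ` (UNIV \<times> Basis)"
    unfolding Basis_vec_def by auto
  have inj: "inj_on (\<lambda>(i,u). axis i u) (UNIV \<times> (Basis::'a set))"
    by (auto simp: inj_on_def axis_eq_axis nonzero_Basis)
  have axis: "prod_br br X (prod_br br Y (axis i u)) = axis i (br (X$i) (br (Y$i) u))" for i u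
    by (simp add: prod_br_def axis_def vec_eq_iff)
  have "killing (prod_br br) X Y = (\<Sum>(i,u)\<in>UNIV \<times> (Basis::'a set). br (X$i) (br (Y$i) u) \<bullet> u)"
    unfolding killing_def lin_trace_def basis
    by (subst sum.reindex[OF inj]) (simp add: case_prod_beta axis inner_axis_axis)
  also have "\<dots> = (\<Sum>i\<in>UNIV. killing br (X$i) (Y$i))"
    by (simp add: sum.cartesian_product[symmetric] killing_def lin_trace_def)
  finally show ?thesis .
qed

lemma br_anticomm: "br x y = - br y x"
proof -
  have "br (x + y) (x + y) = br x x + br x y + (br y x + br y y)"
    using bilinear_br by (simp only: bilinear_ladd bilinear_radd)
  then have "br x y + br y x = 0" by simp
  then show ?thesis by (simp add: eq_neg_iff_add_eq_0)
qed

lemma br_br_left: "br (br x y) u = br x (br y u) - br y (br x u)"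
proof -
  have "br (br x y) u = - br u (br x y)" by (rule br_anticomm)
  also have "\<dots> = br x (br y u) + br y (br u x)"
    using jacobi[of x y u] by (metis add.commute minus_unique)
  also have "br y (br u x) = - br y (br x u)"
    using br_anticomm[of u x] linear_br_right[of y] by (simp add: linear_neg)
  finally show ?thesis by simp
qed

lemma killing_commute: "killing br x y = killing br y x"
  unfolding killing_def by (rule lin_trace_commute[OF linear_br_right linear_br_right])

lemma killing_br_assoc: "killing br (br x y) z = killing br x (br y z)"
proof -
  have lin: "linear (\<lambda>w. br u (br v w))" for u v
    using linear_compose[OF linear_br_right linear_br_right] by (simp add: o_def)
  have "killing br (br x y) z
      = lin_trace (\<lambda>w. br x (br y (br z w))) - lin_trace (\<lambda>w. br y (br x (br z w)))"
    unfolding killing_def br_br_left by (rule lin_trace_diff)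
  also have "lin_trace (\<lambda>w. br y (br x (br z w))) = lin_trace (\<lambda>w. br x (br z (br y w)))"
    by (rule lin_trace_commute[OF linear_br_right lin])
  also have "lin_trace (\<lambda>w. br x (br y (br z w))) - \<dots>
      = lin_trace (\<lambda>w. br x (br y (br z w)) - br x (br z (br y w)))"
    by (rule lin_trace_diff[symmetric])
  also have "\<dots> = killing br x (br y z)"
    unfolding killing_def br_br_left by (simp add: br_diff_right)
  finally show ?thesis .
qed

lemma bilinear_killing: "bilinear (killing br)"
proof -
  have right: "linear (killing br x)" for x
    unfolding killing_def lin_trace_def using bilinear_br
    by (intro linearI) (simp_all add: bilinear_ladd bilinear_radd bilinear_lmul bilinear_rmul
        inner_add_left sum.distrib sum_distrib_left)
  then have "linear (\<lambda>x. killing br x y)" for y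
    by (simp add: killing_commute[of _ y])
  with right show ?thesis by (simp add: bilinear_def)
qed

lemma lie_ideal_radical:
  fixes n :: "'a \<Rightarrow> 'a \<Rightarrow> real"
  assumes "bilinear n" and invariant: "\<And>z x y. n (br z x) y + n x (br z y) = 0"
  shows "lie_ideal br {x. \<forall>y. n x y = 0}"
  unfolding lie_ideal_def
proof (intro conjI allI impI)
  show "subspace {x. \<forall>y. n x y = 0}" unfolding subspace_def using assms(1)
    by (simp add: bilinear_ladd bilinear_lmul bilinear_lzero)
  fix x y assume "y \<in> {x. \<forall>y. n x y = 0}"
  then show "br x y \<in> {x. \<forall>y. n x y = 0}" using invariant[of x y] by auto
qed

lemma lie_ideal_span_brackets: "lie_ideal br (span (range (case_prod br)))"
  unfolding lie_ideal_def
proof (intro conjI allI impI)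
  show "subspace (span (range (case_prod br)))" by simp
  fix x y assume "y \<in> span (range (case_prod br))"
  then show "br x y \<in> span (range (case_prod br))"
  proof (induct rule: span_induct)
    case base
    show ?case unfolding subspace_def
      by (simp add: br_add_right br_scale_right span_add span_scale span_zero)
  next
    case (step y)
    then have "br x y \<in> range (case_prod br)" by auto
    then show ?case by (rule span_base)
  qed
qed

end

section \<open>Schur's lemma for compact simple Lie algebras\<close>

lemma exists_nonzero: "\<exists>x::'a::euclidean_space. x \<noteq> 0"
  using nonempty_Basis nonzero_Basis by blast

lemma psd_form_radical:
  fixes n :: "'v::real_vector \<Rightarrow> 'v \<Rightarrow> real"
  assumes bn: "bilinear n" and psd: "\<And>x. n x x \<ge> 0" and sym: "\<And>x y. n x y = n y x"
    and null: "n x x = 0"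
  shows "n x y = 0"
proof (rule ccontr)
  assume "n x y \<noteq> 0"
  define b c where "b = n x y" and "c = n y y"
  define d where "d = c + 1"
  define t where "t = - b / d"
  have "d > 0" using psd[of y] by (simp add: c_def d_def)
  then have td: "t * d = - b" by (simp add: t_def)
  have quad: "n (x + t *\<^sub>R y) (x + t *\<^sub>R y) = 2 * t * b + t * t * c"
    using bn null sym[of y x]
    by (simp add: b_def c_def bilinear_ladd bilinear_radd bilinear_lmul bilinear_rmul)
  have "(2 * t * b + t * t * c) * (d * d) = 2 * b * (t * d) * d + (t * d) * (t * d) * c"
    by (simp add: algebra_simps)
  also have "\<dots> = 2 * b * (- b) * d + (- b) * (- b) * c" by (simp only: td)
  also have "\<dots> = - b\<^sup>2 * (c + 2)" by (simp add: d_def algebra_simps power2_eq_square)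
  also have "\<dots> < 0" using psd[of y] \<open>n x y \<noteq> 0\<close> by (simp add: b_def c_def mult_neg_pos)
  finally have "2 * t * b + t * t * c < 0"
    using \<open>d > 0\<close> by (simp add: mult_less_0_iff)
  then show False using psd[of "x + t *\<^sub>R y"] quad by simp
qed

locale compact_lie_alg = lie_alg +
  assumes killing_neg_def: "x \<noteq> 0 \<Longrightarrow> killing br x x < 0"
begin

definition B :: "'a \<Rightarrow> 'a \<Rightarrow> real" where "B x y = - killing br x y"

lemma bilinear_B: "bilinear B"
  unfolding bilinear_def linear_iff B_def using bilinear_killing
  by (simp add: bilinear_ladd bilinear_radd bilinear_lmul bilinear_rmul)

lemma B_commute: "B x y = B y x" by (simp add: B_def killing_commute)
lemma B_pos: "x \<noteq> 0 \<Longrightarrow> B x x > 0" using killing_neg_def by (simp add: B_def)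
lemma B_br_assoc: "B (br x y) z = B x (br y z)" by (simp add: B_def killing_br_assoc)
lemma B_zero_left [simp]: "B 0 y = 0" using bilinear_B by (simp add: bilinear_lzero)
lemma B_zero_right [simp]: "B x 0 = 0" using bilinear_B by (simp add: bilinear_rzero)
lemma B_scale_left: "B (c *\<^sub>R x) y = c * B x y" using bilinear_B by (simp add: bilinear_lmul)
lemma B_scale_right: "B x (c *\<^sub>R y) = c * B x y" using bilinear_B by (simp add: bilinear_rmul)
lemma B_diff_left: "B (x - z) y = B x y - B z y" using bilinear_B by (simp add: bilinear_lsub)
lemma B_sum_left: "B (sum f S) y = (\<Sum>i\<in>S. B (f i) y)"
  using linear_sum[of "\<lambda>x. B x y"] bilinear_B by (simp add: bilinear_def)

lemma B_invariant: "B (br z x) y + B x (br z y) = 0"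
  using B_br_assoc[of x z y] bilinear_B br_anticomm[of z x] by (simp add: bilinear_lneg)

lemma B_br_self: "B (br x y) x = 0"
  using B_invariant[of x y x] by simp

lemma B_br_swap: "B (br y z) x = - B (br x z) y"
  using B_invariant[of z y x] B_commute[of y] br_anticomm[of z] bilinear_B
  by (metis B_br_assoc B_commute add.inverse_unique)

lemma B_nondegenerate: "(\<And>y. B x y = 0) \<Longrightarrow> x = 0"
  using B_pos by force

lemma max_ratio_to_B:
  fixes n :: "'a \<Rightarrow> 'a \<Rightarrow> real"
  assumes bn: "bilinear n"
  obtains c x0 where "x0 \<noteq> 0" "n x0 x0 = c * B x0 x0" "\<And>y. n y y \<le> c * B y y"
proof -
  let ?S = "sphere (0::'a) 1"
  let ?h = "\<lambda>x. n x x / B x x"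
  have "continuous_on ?S (\<lambda>x. n x x)" "continuous_on ?S (\<lambda>x. B x x)"
    using bounded_bilinear.continuous_on[OF iffD1[OF bilinear_conv_bounded_bilinear bn], of ?S id id]
      bounded_bilinear.continuous_on[OF iffD1[OF bilinear_conv_bounded_bilinear bilinear_B], of ?S id id]
    by (simp_all add: continuous_on_id)
  then have "continuous_on ?S ?h"
    by (rule continuous_on_divide) (auto intro!: B_pos[THEN less_imp_neq, THEN not_sym])
  moreover obtain b :: 'a where "b \<in> Basis" using nonempty_Basis by blast
  then have "?S \<noteq> {}" by (auto intro!: exI[of _ b])
  ultimately obtain x0 where x0: "x0 \<in> ?S" and max: "\<And>y. y \<in> ?S \<Longrightarrow> ?h y \<le> ?h x0"
    using continuous_attains_sup[OF compact_sphere] by blast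
  define c where "c = ?h x0"
  have "x0 \<noteq> 0" using x0 by auto
  moreover have "n x0 x0 = c * B x0 x0" using B_pos[OF \<open>x0 \<noteq> 0\<close>] by (simp add: c_def)
  moreover have "n y y \<le> c * B y y" for y
  proof (cases "y = 0")
    case True then show ?thesis using bn by (simp add: bilinear_lzero)
  next
    case False
    define u where "u = (1 / norm y) *\<^sub>R y"
    have "u \<in> ?S" "u \<noteq> 0" using False by (simp_all add: u_def)
    then have "n u u \<le> c * B u u" using max[of u] B_pos[of u] by (simp add: c_def divide_le_eq)
    moreover have "n u u = (1/norm y)^2 * n y y" "B u u = (1/norm y)^2 * B y y"
      using bn bilinear_B by (simp_all add: u_def bilinear_lmul bilinear_rmul power2_eq_square)
    ultimately have "(1/norm y)^2 * n y y \<le> (1/norm y)^2 * (c * B y y)"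
      by (simp add: mult.left_commute)
    then show ?thesis using False by (simp add: mult_le_cancel_left_pos)
  qed
  ultimately show ?thesis by (rule that)
qed

end

locale compact_simple_lie_alg = compact_lie_alg +
  assumes simple: "simple_lie_algebra br"
begin

lemma lie_ideal_trivial: "lie_ideal br I \<Longrightarrow> I = {0} \<or> I = UNIV"
  using simple by (simp add: simple_lie_algebra_def)

lemma span_brackets: "span (range (case_prod br)) = UNIV"
proof -
  obtain x y where "br x y \<noteq> 0" using simple by (auto simp: simple_lie_algebra_def)
  moreover have "br x y \<in> span (range (case_prod br))"
    by (rule span_base) (metis case_prod_conv rangeI)
  ultimately have "span (range (case_prod br)) \<noteq> {0}" by blast
  with lie_ideal_trivial[OF lie_ideal_span_brackets] show ?thesis by blast
qed

lemma bilinear_eq_0_if_eq_0_on_brackets: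
  fixes n :: "'a \<Rightarrow> 'a \<Rightarrow> real"
  assumes "bilinear n" and "\<And>x y z. n (br x y) z = 0"
  shows "n w z = 0"
proof -
  have "w \<in> span (range (case_prod br))" using span_brackets by simp
  then show ?thesis
  proof (induct rule: span_induct)
    case base
    show ?case unfolding subspace_def using assms(1)
      by (simp add: bilinear_ladd bilinear_lmul bilinear_lzero)
  qed (use assms(2) in auto)
qed

lemma invariant_antisym_form_eq_0:
  fixes n :: "'a \<Rightarrow> 'a \<Rightarrow> real"
  assumes bn: "bilinear n" and antisym: "\<And>x y. n x y = - n y x"
    and invariant: "\<And>z x y. n (br z x) y + n x (br z y) = 0"
  shows "n x y = 0"
proof -
  define \<phi> where "\<phi> x y z = n (br x y) z" for x y z
  have swap12: "\<phi> x y z = - \<phi> y x z" for x y z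
    unfolding \<phi>_def using br_anticomm[of x y] bn by (simp add: bilinear_lneg)
  have swap23: "\<phi> x y z = \<phi> x z y" for x y z
    unfolding \<phi>_def using invariant[of x y z] antisym[of y "br x z"] by (simp add: eq_neg_iff_add_eq_0)
  have "\<phi> x y z = - \<phi> x y z" for x y z
    using swap12[of x y z] swap12[of z x y] swap12[of y z x] swap23[of x y z] swap23[of z x y]
      swap23[of y x z] by linarith
  then have "n (br x y) z = 0" for x y z by (simp add: \<phi>_def)
  then show ?thesis by (rule bilinear_eq_0_if_eq_0_on_brackets[OF bn])
qed

lemma invariant_sym_form_multiple_B:
  fixes n :: "'a \<Rightarrow> 'a \<Rightarrow> real"
  assumes bn: "bilinear n" and sym: "\<And>x y. n x y = n y x"
    and invariant: "\<And>z x y. n (br z x) y + n x (br z y) = 0"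
  shows "\<exists>c. \<forall>x y. n x y = c * B x y"
proof -
  obtain c x0 where x0: "x0 \<noteq> 0" "n x0 x0 = c * B x0 x0" and le: "\<And>y. n y y \<le> c * B y y"
    using max_ratio_to_B[OF bn] by blast
  \<comment> \<open>\<open>c * B - n\<close> is positive semidefinite and null at \<open>x0\<close>, so its radical is a nonzero ideal\<close>
  define m where "m x y = c * B x y - n x y" for x y
  have bm: "bilinear m"
    unfolding bilinear_def linear_iff m_def using bn bilinear_B
    by (simp add: bilinear_ladd bilinear_radd bilinear_lmul bilinear_rmul algebra_simps)
  have "m (br z x) y + m x (br z y)
      = c * (B (br z x) y + B x (br z y)) - (n (br z x) y + n x (br z y))" for z x y
    by (simp add: m_def algebra_simps)
  then have "m (br z x) y + m x (br z y) = 0" for z x y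
    by (simp add: invariant B_invariant)
  then have ideal: "lie_ideal br {x. \<forall>y. m x y = 0}" by (rule lie_ideal_radical[OF bm])
  have "m x0 y = 0" for y
  proof (rule psd_form_radical[OF bm])
    show "m x x \<ge> 0" for x using le[of x] by (simp add: m_def)
    show "m x y = m y x" for x y by (simp add: m_def sym[of x y] B_commute[of x y])
    show "m x0 x0 = 0" using x0(2) by (simp add: m_def)
  qed
  then have "x0 \<in> {x. \<forall>y. m x y = 0}" by simp
  then have "{x. \<forall>y. m x y = 0} = UNIV" using lie_ideal_trivial[OF ideal] x0(1) by blast
  then have "\<forall>x y. m x y = 0" by (simp add: set_eq_iff)
  then have "n x y = c * B x y" for x y unfolding m_def by (metis eq_iff_diff_eq_0)
  then show ?thesis by blast
qed

lemma invariant_form_multiple_B: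
  fixes n :: "'a \<Rightarrow> 'a \<Rightarrow> real"
  assumes bn: "bilinear n"
    and invariant: "\<And>z x y. n (br z x) y + n x (br z y) = 0"
  shows "\<exists>c. \<forall>x y. n x y = c * B x y"
proof -
  define s where "s x y = n x y + n y x" for x y
  define a where "a x y = n x y - n y x" for x y
  have "bilinear s" "bilinear a" unfolding bilinear_def linear_iff s_def a_def using bn
    by (simp_all add: bilinear_ladd bilinear_radd bilinear_lmul bilinear_rmul algebra_simps)
  moreover have "s (br z x) y + s x (br z y) = 0" "a (br z x) y + a x (br z y) = 0" for z x y
    using invariant[of z x y] invariant[of z y x] by (simp_all add: s_def a_def algebra_simps)
  moreover have "s x y = s y x" "a x y = - a y x" for x y by (simp_all add: s_def a_def)
  ultimately obtain c where c: "\<And>x y. s x y = c * B x y" and a0: "\<And>x y. a x y = 0"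
    using invariant_sym_form_multiple_B[of s] invariant_antisym_form_eq_0[of a] by blast
  have "n x y = (c/2) * B x y" for x y
    using c[of x y] a0[of x y] by (simp add: s_def a_def)
  then show ?thesis by blast
qed

lemma equivariant_map_scalar:
  assumes lT: "linear T" and equivariant: "\<And>z x. T (br z x) = br z (T x)"
  shows "\<exists>c. \<forall>x. T x = c *\<^sub>R x"
proof -
  have "bilinear (\<lambda>x y. B (T x) y)"
    unfolding bilinear_def linear_iff using lT bilinear_B
    by (simp add: bilinear_ladd bilinear_radd bilinear_lmul bilinear_rmul linear_add linear_scale)
  moreover have "B (T (br z x)) y + B (T x) (br z y) = 0" for z x y
    using B_invariant[of z "T x" y] by (simp add: equivariant)
  ultimately obtain c where c: "\<And>x y. B (T x) y = c * B x y"
    using invariant_form_multiple_B by blast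
  have "T x - c *\<^sub>R x = 0" for x
    by (rule B_nondegenerate) (simp add: c B_diff_left B_scale_left)
  then show ?thesis by auto
qed

end

section \<open>Invariant complements of the diagonal\<close>

definition diag :: "'a \<Rightarrow> ('a::zero)^'m" where "diag x = (\<chi> i. x)"
definition emb :: "'m \<Rightarrow> 'a \<Rightarrow> ('a::zero)^'m" where "emb i x = (\<chi> k. if k = i then x else 0)"
definition tens :: "('m \<Rightarrow> real) \<Rightarrow> 'a \<Rightarrow> ('a::real_vector)^'m" where "tens s u = (\<chi> i. s i *\<^sub>R u)"

lemma diag_nth [simp]: "diag x $ i = x" by (simp add: diag_def)
lemma emb_nth: "emb i x $ k = (if k = i then x else 0)" by (simp add: emb_def)
lemma tens_nth [simp]: "tens s u $ i = s i *\<^sub>R u" by (simp add: tens_def)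

lemma diag_0 [simp]: "diag 0 = 0" by (simp add: vec_eq_iff)

lemma diag_sub_eq_range: "diag_sub = range diag"
  by (auto simp: diag_sub_def diag_def)

lemma diag_in_diag_sub [simp]: "diag x \<in> diag_sub"
  by (simp add: diag_sub_eq_range)

lemma diag_sub_iff: "X \<in> diag_sub \<longleftrightarrow> X = diag (X $ i)"
  by (auto simp: diag_sub_eq_range vec_eq_iff)

lemma diag_sum: "diag (sum f S) = (\<Sum>i\<in>S. diag (f i))"
  by (simp add: vec_eq_iff sum_component)

lemma subspace_diag_sub: "subspace (diag_sub :: ('a::real_vector^'m) set)"
  unfolding subspace_def diag_sub_eq_range
  by (auto intro!: range_eqI[of _ _ "_ + _"] range_eqI[of _ _ "_ *\<^sub>R _"] range_eqI[of _ _ 0]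
      simp: vec_eq_iff)

lemma vec_eq_sum_emb: "X = (\<Sum>i\<in>UNIV. emb i (X $ i))"
  by (simp add: vec_eq_iff sum_component emb_nth)

lemma emb_add: "emb i (x + y) = emb i x + emb i (y::'a::real_vector)"
  by (simp add: vec_eq_iff emb_nth)

lemma emb_scale: "emb i (c *\<^sub>R x) = c *\<^sub>R emb i (x::'a::real_vector)"
  by (simp add: vec_eq_iff emb_nth)

lemma tens_notin_diag_sub:
  assumes "s i \<noteq> s k" "x \<noteq> 0"
  shows "tens s x \<notin> diag_sub"
  using assms diag_sub_iff[of "tens s x" i] by (auto simp: vec_eq_iff dest: spec[of _ k])

lemma exists_other_index:
  assumes "CARD('m::finite) \<ge> 2"
  shows "\<exists>k::'m. k \<noteq> i"
proof (rule ccontr)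
  assume "\<not> ?thesis"
  then have "(UNIV::'m set) = {i}" by auto
  then have "CARD('m) = card {i}" by (rule arg_cong)
  then show False using assms by simp
qed

context lie_alg
begin

lemma prod_br_diag_emb: "prod_br br (diag z) (emb i x) = emb i (br z x)"
  by (simp add: vec_eq_iff emb_nth)

lemma prod_br_tens: "prod_br br (tens s u) (tens t v) = tens (\<lambda>i. s i * t i) (br u v)"
  by (simp add: vec_eq_iff br_scale_left br_scale_right)

lemma prod_br_add_left: "prod_br br (X + Y) Z = prod_br br X Z + prod_br br Y Z"
  by (simp add: vec_eq_iff br_add_left)

lemma prod_br_diff_right: "prod_br br X (Y - Z) = prod_br br X Y - prod_br br X Z"
  by (simp add: vec_eq_iff br_diff_right)

end

lemma subspace_reductive_compl: "reductive_compl br p \<Longrightarrow> subspace p"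
  by (simp add: reductive_compl_def)

lemma pcomp_unique:
  assumes rc: "reductive_compl br p" and "A \<in> p" "X - A \<in> diag_sub"
  shows "pcomp p X = A"
  unfolding pcomp_def
proof (rule the_equality)
  fix A' assume A': "A' \<in> p \<and> X - A' \<in> diag_sub"
  have "A' - A \<in> p"
    using A' assms(2) subspace_diff[OF subspace_reductive_compl[OF rc]] by blast
  moreover have "(X - A) - (X - A') \<in> diag_sub"
    using A' assms(3) subspace_diff[OF subspace_diag_sub] by blast
  then have "A' - A \<in> diag_sub" by simp
  moreover have "p \<inter> diag_sub = {0}" using rc by (simp add: reductive_compl_def)
  ultimately show "A' = A" by (metis IntI right_minus_eq singletonD)
qed (use assms in simp)

lemma pcomp_mem:
  assumes rc: "reductive_compl br p"
  shows "pcomp p X \<in> p" and "X - pcomp p X \<in> diag_sub"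
proof -
  obtain A D where "A \<in> p" "D \<in> diag_sub" "X = A + D"
    using rc unfolding reductive_compl_def by blast
  then have "pcomp p X = A" by (intro pcomp_unique[OF rc]) auto
  with \<open>A \<in> p\<close> \<open>D \<in> diag_sub\<close> \<open>X = A + D\<close>
  show "pcomp p X \<in> p" and "X - pcomp p X \<in> diag_sub" by auto
qed

lemma pcomp_id: "reductive_compl br p \<Longrightarrow> A \<in> p \<Longrightarrow> pcomp p A = A"
  by (rule pcomp_unique) (auto intro: subspace_0[OF subspace_diag_sub])

lemma linear_pcomp:
  assumes rc: "reductive_compl br p"
  shows "linear (pcomp p)"
proof (rule linearI)
  have sp: "subspace p" and sd: "subspace (diag_sub :: ('a::euclidean_space^'b) set)"
    using subspace_reductive_compl[OF rc] subspace_diag_sub by auto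
  fix X Y :: "'a^'b" and c :: real
  note mem = pcomp_mem[OF rc]
  show "pcomp p (X + Y) = pcomp p X + pcomp p Y"
    using subspace_add[OF sp mem(1) mem(1)] subspace_add[OF sd mem(2)[of X] mem(2)[of Y]]
    by (intro pcomp_unique[OF rc]) (simp_all add: algebra_simps)
  show "pcomp p (c *\<^sub>R X) = c *\<^sub>R pcomp p X"
    using subspace_scale[OF sp mem(1)] subspace_scale[OF sd mem(2)[of X]]
    by (intro pcomp_unique[OF rc]) (simp_all add: algebra_simps)
qed

lemma (in lie_alg) pcomp_equivariant:
  assumes rc: "reductive_compl br p"
  shows "pcomp p (prod_br br (diag z) V) = prod_br br (diag z) (pcomp p V)"
proof (rule pcomp_unique[OF rc])
  show "prod_br br (diag z) (pcomp p V) \<in> p"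
    using rc pcomp_mem(1)[OF rc] by (auto simp: reductive_compl_def)
  obtain w where "V - pcomp p V = diag w"
    using pcomp_mem(2)[OF rc] by (auto simp: diag_sub_eq_range)
  then have "prod_br br (diag z) V - prod_br br (diag z) (pcomp p V) = diag (br z w)"
    by (simp add: prod_br_diff_right[symmetric] vec_eq_iff)
  then show "prod_br br (diag z) V - prod_br br (diag z) (pcomp p V) \<in> diag_sub" by simp
qed

section \<open>Block structure of invariant metrics\<close>

lemma inv_metric_bilinear: "inv_metric br M \<Longrightarrow> bilinear M"
  by (simp add: inv_metric_def)

lemma inv_metric_commute: "inv_metric br M \<Longrightarrow> M X Y = M Y X"
  by (simp add: inv_metric_def)

lemma inv_metric_diag_left: "inv_metric br M \<Longrightarrow> D \<in> diag_sub \<Longrightarrow> M D Y = 0"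
  by (simp add: inv_metric_def)

lemma inv_metric_diag_right: "inv_metric br M \<Longrightarrow> D \<in> diag_sub \<Longrightarrow> M Y D = 0"
  by (metis inv_metric_diag_left inv_metric_commute)

lemma inv_metric_pos: "inv_metric br M \<Longrightarrow> X \<notin> diag_sub \<Longrightarrow> M X X > 0"
  by (simp add: inv_metric_def)

lemma inv_metric_invariant:
  "inv_metric br M \<Longrightarrow> M (prod_br br (diag z) X) Y + M X (prod_br br (diag z) Y) = 0"
  unfolding inv_metric_def using diag_in_diag_sub by blast

lemma inv_metric_mod_diag:
  assumes im: "inv_metric br M" and "X - X' \<in> diag_sub" "Y - Y' \<in> diag_sub"
  shows "M X Y = M X' Y'"
proof -
  define D E where "D = X - X'" and "E = Y - Y'"
  have "M X Y = M (X' + D) (Y' + E)" by (simp add: D_def E_def)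
  also have "\<dots> = M X' Y' + M X' E + M D Y' + M D E"
    using inv_metric_bilinear[OF im] by (simp add: bilinear_ladd bilinear_radd)
  also have "\<dots> = M X' Y'"
    using assms inv_metric_diag_left[OF im] inv_metric_diag_right[OF im] by (simp add: D_def E_def)
  finally show ?thesis .
qed

lemma generated_by_self:
  assumes "inv_metric br M" "reductive_compl br p"
  shows "generated_by br M p M"
  using assms inv_metric_mod_diag[OF assms(1)] pcomp_mem[OF assms(2)]
  by (simp add: generated_by_def)

lemma naturally_reductive_iff_metric:
  "naturally_reductive br M \<longleftrightarrow>
     (\<exists>p ip. generated_by br M p ip \<and> (\<forall>X\<in>p. \<forall>Y\<in>p. M (prod_br br X Y) X = 0))"
proof -
  have "M W X = ip (pcomp p W) X" if "generated_by br M p ip" "X \<in> p" for p ip W X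
    using that pcomp_id[of br p X] by (simp add: generated_by_def)
  then show ?thesis unfolding naturally_reductive_def by metis
qed

definition coeff_form :: "('m::finite \<Rightarrow> 'm \<Rightarrow> real) \<Rightarrow> ('m \<Rightarrow> real) \<Rightarrow> ('m \<Rightarrow> real) \<Rightarrow> real" where
  "coeff_form a s t = (\<Sum>i\<in>UNIV. \<Sum>k\<in>UNIV. s i * t k * a i k)"

context compact_lie_alg
begin

lemma metric_expand:
  fixes M :: "'a^'m::finite \<Rightarrow> 'a^'m \<Rightarrow> real"
  assumes bM: "bilinear M" and a: "\<And>i k x y. M (emb i x) (emb k y) = a i k * B x y"
  shows "M X Y = (\<Sum>i\<in>UNIV. \<Sum>k\<in>UNIV. a i k * B (X$i) (Y$k))"
proof -
  have "M X Y = M (\<Sum>i\<in>UNIV. emb i (X $ i)) (\<Sum>k\<in>UNIV. emb k (Y $ k))"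
    using vec_eq_sum_emb[of X] vec_eq_sum_emb[of Y] by simp
  also have "\<dots> = (\<Sum>(i,k)\<in>UNIV \<times> UNIV. M (emb i (X $ i)) (emb k (Y $ k)))"
    by (rule bilinear_sum[OF bM])
  finally show ?thesis by (simp add: a sum.cartesian_product)
qed

lemma metric_tens:
  fixes M :: "'a^'m::finite \<Rightarrow> 'a^'m \<Rightarrow> real"
  assumes "bilinear M" and a: "\<And>i k x y. M (emb i x) (emb k y) = a i k * B x y"
  shows "M (tens s u) (tens t v) = coeff_form a s t * B u v"
  unfolding metric_expand[OF assms] coeff_form_def
  by (simp add: B_scale_left B_scale_right sum_distrib_left mult_ac)

end

context compact_simple_lie_alg
begin

lemma inv_metric_blocks:
  fixes M :: "'a^'m::finite \<Rightarrow> 'a^'m \<Rightarrow> real"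
  assumes im: "inv_metric br M"
  obtains a where "\<And>i k x y. M (emb i x) (emb k y) = a i k * B x y"
proof -
  have "\<exists>c. \<forall>x y. M (emb i x) (emb k y) = c * B x y" for i k
  proof (rule invariant_form_multiple_B)
    show "bilinear (\<lambda>x y. M (emb i x) (emb k y))"
      unfolding bilinear_def linear_iff using inv_metric_bilinear[OF im]
      by (simp add: emb_add emb_scale bilinear_ladd bilinear_radd bilinear_lmul bilinear_rmul)
    show "M (emb i (br z x)) (emb k y) + M (emb i x) (emb k (br z y)) = 0" for z x y
      using inv_metric_invariant[OF im, of z "emb i x" "emb k y"] by (simp add: prod_br_diag_emb)
  qed
  then show ?thesis using that by metis
qed

context
  fixes M :: "'a^'m::finite \<Rightarrow> 'a^'m \<Rightarrow> real" and a :: "'m \<Rightarrow> 'm \<Rightarrow> real"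
  assumes im: "inv_metric br M" and blocks: "\<And>i k x y. M (emb i x) (emb k y) = a i k * B x y"
begin

lemma blocks_commute: "a i k = a k i"
proof -
  obtain x :: 'a where "x \<noteq> 0" using exists_nonzero by blast
  then show ?thesis
    using blocks[of i x k x] blocks[of k x i x] inv_metric_commute[OF im] B_pos[of x] by force
qed

lemma blocks_row_sum: "(\<Sum>k\<in>UNIV. a i k) = 0"
proof -
  obtain x :: 'a where "x \<noteq> 0" using exists_nonzero by blast
  have "0 = M (emb i x) (diag x)" using inv_metric_diag_right[OF im] by simp
  also have "\<dots> = (\<Sum>j\<in>UNIV. if j = i then (\<Sum>k\<in>UNIV. a i k * B x x) else 0)"
    unfolding metric_expand[OF inv_metric_bilinear[OF im] blocks]
    by (intro sum.cong) (simp_all add: emb_nth)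
  also have "\<dots> = (\<Sum>k\<in>UNIV. a i k) * B x x" by (simp add: sum_distrib_right)
  finally show ?thesis using B_pos[OF \<open>x \<noteq> 0\<close>] by simp
qed

lemma coeff_form_pos: "s i \<noteq> s k \<Longrightarrow> coeff_form a s s > 0"
proof -
  assume "s i \<noteq> s k"
  obtain x :: 'a where "x \<noteq> 0" using exists_nonzero by blast
  have "M (tens s x) (tens s x) > 0"
    by (rule inv_metric_pos[OF im tens_notin_diag_sub]) fact+
  then show ?thesis
    using B_pos[OF \<open>x \<noteq> 0\<close>] metric_tens[OF inv_metric_bilinear[OF im] blocks]
    by (simp add: zero_less_mult_iff)
qed

end

end

definition coeff_proj :: "('m::finite \<Rightarrow> real) \<Rightarrow> ('m \<Rightarrow> real) \<Rightarrow> 'm \<Rightarrow> real" where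
  "coeff_proj c s i = s i - (\<Sum>k\<in>UNIV. c k * s k)"

lemma pcomp_tens:
  assumes "\<And>V. pcomp p V = V - diag (\<Sum>i\<in>UNIV. c i *\<^sub>R V $ i)"
  shows "pcomp p (tens s u :: 'a::euclidean_space^'m::finite) = tens (coeff_proj c s) u"
  by (simp add: assms vec_eq_iff coeff_proj_def scaleR_diff_left scaleR_sum_left)

context compact_simple_lie_alg
begin

lemma reductive_compl_coeffs:
  fixes p :: "('a^'m::finite) set"
  assumes rc: "reductive_compl br p"
  obtains c where "\<And>V. pcomp p V = V - diag (\<Sum>i\<in>UNIV. c i *\<^sub>R V $ i)" and "(\<Sum>i\<in>UNIV. c i) = 1"
proof -
  define \<pi> where "\<pi> V = V - pcomp p V" for V
  have lin: "linear \<pi>"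
    unfolding \<pi>_def using linear_pcomp[OF rc] by (intro linear_compose_sub linear_id[unfolded id_def])
  have \<pi>_diag: "\<pi> V = diag (\<pi> V $ i)" for V i
    unfolding \<pi>_def by (rule diag_sub_iff[THEN iffD1, OF pcomp_mem(2)[OF rc]])
  have "\<exists>c. \<forall>x. \<pi> (emb i x) $ i = c *\<^sub>R x" for i
  proof (rule equivariant_map_scalar)
    show "linear (\<lambda>x. \<pi> (emb i x) $ i)"
      using lin by (intro linearI) (simp_all add: emb_add emb_scale linear_add linear_scale)
    show "\<pi> (emb i (br z x)) $ i = br z (\<pi> (emb i x) $ i)" for z x
      using pcomp_equivariant[OF rc, of z "emb i x"]
      by (simp add: \<pi>_def prod_br_diag_emb[symmetric] prod_br_diff_right[symmetric])
  qed
  then obtain c where c: "\<And>i x. \<pi> (emb i x) $ i = c i *\<^sub>R x" by metis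
  have \<pi>_eq: "V - pcomp p V = diag (\<Sum>i\<in>UNIV. c i *\<^sub>R V $ i)" for V
  proof -
    have "\<pi> V = (\<Sum>i\<in>UNIV. \<pi> (emb i (V $ i)))"
      using linear_sum[OF lin] vec_eq_sum_emb[of V] by metis
    also have "\<dots> = diag (\<Sum>i\<in>UNIV. c i *\<^sub>R V $ i)"
      using \<pi>_diag c by (metis (no_types, lifting) diag_sum sum.cong)
    finally show ?thesis by (simp only: \<pi>_def)
  qed
  have pc: "pcomp p V = V - diag (\<Sum>i\<in>UNIV. c i *\<^sub>R V $ i)" for V
    unfolding \<pi>_eq[symmetric] by simp
  obtain x :: 'a where "x \<noteq> 0" using exists_nonzero by blast
  have "pcomp p (diag x) = 0"
    by (rule pcomp_unique[OF rc]) (simp_all add: subspace_0[OF subspace_reductive_compl[OF rc]])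
  then have "(\<Sum>i\<in>UNIV. c i) *\<^sub>R x = 1 *\<^sub>R x"
    using pc[of "diag x"] by (simp add: vec_eq_iff scaleR_sum_left)
  then have "(\<Sum>i\<in>UNIV. c i) = 1" using \<open>x \<noteq> 0\<close> by (simp only: scaleR_cancel_right) simp
  with pc show ?thesis by (rule that)
qed

lemma coeff_form_nat_red:
  fixes M :: "'a^'m::finite \<Rightarrow> 'a^'m \<Rightarrow> real" and s t r :: "'m \<Rightarrow> real"
  assumes im: "inv_metric br M" and blocks: "\<And>i k x y. M (emb i x) (emb k y) = a i k * B x y"
    and rc: "reductive_compl br p"
    and pc: "\<And>V. pcomp p V = V - diag (\<Sum>i\<in>UNIV. c i *\<^sub>R V $ i)"
    and nr: "\<And>X Y. X \<in> p \<Longrightarrow> Y \<in> p \<Longrightarrow> M (prod_br br X Y) X = 0"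
  defines "S \<equiv> coeff_proj c s" and "T \<equiv> coeff_proj c t" and "R \<equiv> coeff_proj c r"
  shows "coeff_form a (\<lambda>i. S i * R i) T = coeff_form a (\<lambda>i. T i * R i) S"
proof -
  obtain x z where "br x z \<noteq> 0" using simple by (auto simp: simple_lie_algebra_def)
  define y where "y = br x z"
  have in_p: "tens (coeff_proj c s') u \<in> p" for s' and u :: 'a
    using pcomp_mem(1)[OF rc, of "tens s' u"] pcomp_tens[OF pc] by simp
  define X where "X = tens S x + tens T y"
  have "X \<in> p" unfolding X_def S_def T_def
    using in_p subspace_add[OF subspace_reductive_compl[OF rc]] by blast
  moreover have "tens R z \<in> p" unfolding R_def by (rule in_p)
  ultimately have "0 = M (prod_br br X (tens R z)) X" using nr by simp
  also have "\<dots> = (coeff_form a (\<lambda>i. S i * R i) T - coeff_form a (\<lambda>i. T i * R i) S) * B y y"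
  proof -
    have "B (br x z) x = 0" "B (br x z) y = B y y" "B (br y z) x = - B y y" "B (br y z) y = 0"
      using B_br_swap[of y z x] by (simp_all add: B_br_self y_def)
    then show ?thesis
      unfolding X_def using inv_metric_bilinear[OF im]
      by (simp add: prod_br_add_left prod_br_tens bilinear_ladd bilinear_radd
          metric_tens[OF inv_metric_bilinear[OF im] blocks] algebra_simps)
  qed
  finally show ?thesis using B_pos[of y] \<open>br x z \<noteq> 0\<close> by (simp add: y_def)
qed

end

section \<open>The coefficient equations\<close>

definition delta :: "'m \<Rightarrow> 'm \<Rightarrow> real" where
  "delta p i = (if i = p then 1 else 0)"

lemma sum_delta_mult: "(\<Sum>k\<in>UNIV. delta p k * f k) = f (p::'m::finite)"
proof -
  have "(\<lambda>k. delta p k * f k) = (\<lambda>k. if k = p then f k else 0)" by (auto simp: delta_def)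
  then show ?thesis by (simp only:) simp
qed

lemma coeff_proj_delta: "coeff_proj c (delta p) = (\<lambda>i. delta p i - c p)"
proof -
  have "(\<Sum>k\<in>UNIV. c k * delta p k) = c p" using sum_delta_mult[of p c] by (simp add: mult.commute)
  then show ?thesis by (simp add: fun_eq_iff coeff_proj_def)
qed

lemma coeff_form_delta: "coeff_form a (delta i) (delta k) = a i (k::'m::finite)"
proof -
  have "coeff_form a (delta i) (delta k) = (\<Sum>j\<in>UNIV. delta i j * (\<Sum>l\<in>UNIV. delta k l * a j l))"
    by (simp add: coeff_form_def sum_distrib_left mult.assoc)
  then show ?thesis by (simp add: sum_delta_mult)
qed

lemma coeff_form_delta_right:
  assumes rows: "\<And>i. (\<Sum>k\<in>UNIV. a i k) = 0"
  shows "coeff_form a u (\<lambda>k. delta p k - l) = (\<Sum>i\<in>UNIV. u i * a i p)"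
proof -
  have "(\<Sum>k\<in>UNIV. (delta p k - l) * a i k) = a i p" for i
    using rows[of i] by (simp add: left_diff_distrib sum_subtractf sum_delta_mult sum_distrib_left[symmetric])
  then show ?thesis
    unfolding coeff_form_def by (simp add: mult.assoc sum_distrib_left[symmetric])
qed

lemma coeff_relation_of_nat_red:
  fixes a :: "'m::finite \<Rightarrow> 'm \<Rightarrow> real" and c :: "'m \<Rightarrow> real"
  assumes sym: "\<And>i k. a i k = a k i" and rows: "\<And>i. (\<Sum>k\<in>UNIV. a i k) = 0" and "p \<noteq> q"
    and nat_red: "coeff_form a (\<lambda>i. coeff_proj c (delta q) i * coeff_proj c (delta p) i) (coeff_proj c (delta p))
           = coeff_form a (\<lambda>i. coeff_proj c (delta p) i * coeff_proj c (delta p) i) (coeff_proj c (delta q))"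
  shows "(1 - c p) * a p q + c q * a p p = 0"
proof -
  have cols: "(\<Sum>i\<in>UNIV. a i k) = 0" for k using rows[of k] sym by simp
  have "coeff_form a (\<lambda>i. coeff_proj c (delta q) i * coeff_proj c (delta p) i) (coeff_proj c (delta p))
      = (\<Sum>i\<in>UNIV. delta q i * (delta p i * a i p)) - c p * (\<Sum>i\<in>UNIV. delta q i * a i p)
         - c q * (\<Sum>i\<in>UNIV. delta p i * a i p) + c q * c p * (\<Sum>i\<in>UNIV. a i p)"
    unfolding coeff_proj_delta coeff_form_delta_right[OF rows]
    by (simp add: algebra_simps sum_subtractf sum.distrib sum_distrib_left)
  also have "\<dots> = - c p * a q p - c q * a p p"
    using \<open>p \<noteq> q\<close> cols[of p] by (simp add: sum_delta_mult) (simp add: delta_def)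
  finally have lhs: "coeff_form a (\<lambda>i. coeff_proj c (delta q) i * coeff_proj c (delta p) i) (coeff_proj c (delta p))
      = - c p * a q p - c q * a p p" .
  have "coeff_form a (\<lambda>i. coeff_proj c (delta p) i * coeff_proj c (delta p) i) (coeff_proj c (delta q))
      = (\<Sum>i\<in>UNIV. delta p i * (delta p i * a i q)) - 2 * c p * (\<Sum>i\<in>UNIV. delta p i * a i q)
         + c p * c p * (\<Sum>i\<in>UNIV. a i q)"
    unfolding coeff_proj_delta coeff_form_delta_right[OF rows]
    by (simp add: algebra_simps sum_subtractf sum.distrib sum_distrib_left)
  also have "\<dots> = (1 - 2 * c p) * a p q"
    using cols[of q] by (simp add: sum_delta_mult) (simp add: delta_def algebra_simps)
  finally show ?thesis using nat_red lhs sym[of q p] by (simp add: algebra_simps)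
qed

lemma blocks_rank_one:
  fixes a :: "'m::finite \<Rightarrow> 'm \<Rightarrow> real" and c :: "'m \<Rightarrow> real"
  assumes sym: "\<And>i k. a i k = a k i" and pos: "\<And>i. a i i > 0"
    and rel: "\<And>p q. p \<noteq> q \<Longrightarrow> (1 - c p) * a p q + c q * a p p = 0"
    and sum_c: "(\<Sum>i\<in>UNIV. c i) = 1" and not_one: "\<And>j. c j \<noteq> 1"
  obtains \<mu> where "\<mu> \<noteq> 0" "\<And>i. c i \<noteq> 0" "\<And>i k. a i k = \<mu> * ((if i = k then c i else 0) - c i * c k)"
proof -
  define \<nu> where "\<nu> p = a p p / (1 - c p)" for p
  have "1 - c p \<noteq> 0" for p using not_one[of p] by simp
  then have diag: "a p p = \<nu> p * (1 - c p)"
    and off_diag: "p \<noteq> q \<Longrightarrow> a p q = - c q * \<nu> p" for p q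
    using rel[of p q] by (auto simp: \<nu>_def field_simps)
  obtain r where r: "c r \<noteq> 0"
    using sum_c by (metis sum.neutral zero_neq_one)
  define \<mu> where "\<mu> = \<nu> r / c r"
  have \<nu>_eq: "\<nu> p = \<mu> * c p" for p
  proof (cases "p = r")
    case False
    then have "c r * \<nu> p = c p * \<nu> r"
      using off_diag[of p r] off_diag[of r p] sym[of p r] by simp
    then show ?thesis using r by (simp add: \<mu>_def field_simps)
  qed (use r in \<open>simp add: \<mu>_def\<close>)
  have "a p p = \<mu> * c p * (1 - c p)" for p using diag[of p] \<nu>_eq[of p] by simp
  then have "\<mu> \<noteq> 0" "c i \<noteq> 0" for i using pos[of r] pos[of i] by auto
  moreover have "a i k = \<mu> * ((if i = k then c i else 0) - c i * c k)" for i k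
    using diag[of i] off_diag[of i k] \<nu>_eq[of i] by (cases "i = k") (simp_all add: algebra_simps)
  ultimately show ?thesis by (rule that)
qed

lemma coeff_form_rank_one:
  fixes a :: "'m::finite \<Rightarrow> 'm \<Rightarrow> real"
  assumes "\<And>i k. a i k = \<mu> * ((if i = k then c i else 0) - c i * c k)"
  shows "coeff_form a s t = \<mu> * (\<Sum>l\<in>UNIV. c l * s l * t l) - \<mu> * ((\<Sum>l\<in>UNIV. c l * s l) * (\<Sum>l\<in>UNIV. c l * t l))"
proof -
  have diag_part: "(\<Sum>k\<in>UNIV. s i * t k * (if i = k then c i else 0)) = c i * s i * t i" for i
  proof -
    have "(\<Sum>k\<in>UNIV. s i * t k * (if i = k then c i else 0))
        = (\<Sum>k\<in>UNIV. if i = k then c i * s i * t k else 0)"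
      by (intro sum.cong) auto
    then show ?thesis by simp
  qed
  have "coeff_form a s t = (\<Sum>i\<in>UNIV. \<Sum>k\<in>UNIV.
      \<mu> * (s i * t k * (if i = k then c i else 0)) - \<mu> * ((c i * s i) * (c k * t k)))"
    unfolding coeff_form_def assms by (intro sum.cong refl) (simp add: algebra_simps)
  also have "\<dots> = \<mu> * (\<Sum>i\<in>UNIV. \<Sum>k\<in>UNIV. s i * t k * (if i = k then c i else 0))
      - \<mu> * (\<Sum>i\<in>UNIV. \<Sum>k\<in>UNIV. (c i * s i) * (c k * t k))"
    by (simp add: sum_subtractf sum_distrib_left)
  finally show ?thesis by (simp add: diag_part sum_product)
qed

lemma sum_eq_two_points:
  fixes f :: "'m::finite \<Rightarrow> real"
  assumes "i \<noteq> j" "\<And>l. l \<noteq> i \<Longrightarrow> l \<noteq> j \<Longrightarrow> f l = 0"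
  shows "(\<Sum>l\<in>UNIV. f l) = f i + f j"
proof -
  have "(\<Sum>l\<in>UNIV. f l) = (\<Sum>l\<in>{i, j}. f l)"
    by (rule sum.mono_neutral_right) (use assms in auto)
  then show ?thesis using assms(1) by simp
qed

definition admissible_weights :: "('m::finite \<Rightarrow> real) \<Rightarrow> bool" where
  "admissible_weights \<alpha> \<longleftrightarrow> (\<forall>i. \<alpha> i > 0) \<or>
     (\<exists>j. \<alpha> j < 0 \<and> (\<forall>i. i \<noteq> j \<longrightarrow> \<alpha> i > 0) \<and> (\<Sum>i\<in>UNIV. \<alpha> i) < 0)"

lemma admissible_weights_rank_one:
  fixes a :: "'m::finite \<Rightarrow> 'm \<Rightarrow> real"
  assumes rank_one: "\<And>i k. a i k = \<mu> * ((if i = k then c i else 0) - c i * c k)"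
    and "\<mu> \<noteq> 0" and c_nonzero: "\<And>i. c i \<noteq> 0" and sum_c: "(\<Sum>i\<in>UNIV. c i) = 1"
    and diag_pos: "\<And>i. a i i > 0" and pos: "\<And>s i k. s i \<noteq> s k \<Longrightarrow> coeff_form a s s > 0"
  shows "admissible_weights (\<lambda>i. \<mu> * c i)"
proof (cases "\<mu> > 0")
  case True
  have "c i > 0" for i
  proof (rule ccontr)
    assume "\<not> c i > 0"
    then have "c i * (1 - c i) < 0" using c_nonzero[of i] by (simp add: mult_neg_pos)
    then show False using diag_pos[of i] rank_one[of i i] True by (simp add: mult_pos_neg algebra_simps)
  qed
  then show ?thesis using True by (simp add: admissible_weights_def)
next
  case False
  then have "\<mu> < 0" using \<open>\<mu> \<noteq> 0\<close> by simp
  obtain j where "c j > 0"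
    using sum_c sum_nonpos[of UNIV c] by (metis not_le zero_less_one)
  have neg: "c i < 0" if "i \<noteq> j" for i
  proof (rule ccontr)
    assume "\<not> c i < 0"
    then have "c i > 0" using c_nonzero[of i] by simp
    define s where "s l = (if l = j then c i else if l = i then - c j else 0)" for l
    have "s j \<noteq> s i" using \<open>c i > 0\<close> \<open>c j > 0\<close> that by (simp add: s_def)
    then have "coeff_form a s s > 0" by (rule pos)
    moreover have "(\<Sum>l\<in>UNIV. c l * s l) = 0" "(\<Sum>l\<in>UNIV. c l * s l * s l) = c i * c j * (c i + c j)"
      using that by (simp_all add: sum_eq_two_points[of j i] s_def algebra_simps)
    ultimately have "\<mu> * (c i * c j * (c i + c j)) > 0" by (simp add: coeff_form_rank_one[OF rank_one])
    moreover have "c i * c j * (c i + c j) > 0" using \<open>c i > 0\<close> \<open>c j > 0\<close> by simp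
    with \<open>\<mu> < 0\<close> have "\<mu> * (c i * c j * (c i + c j)) < 0" by (rule mult_neg_pos)
    ultimately show False by linarith
  qed
  have "(\<Sum>i\<in>UNIV. \<mu> * c i) = \<mu>" using sum_c by (simp add: sum_distrib_left[symmetric])
  then show ?thesis using \<open>\<mu> < 0\<close> \<open>c j > 0\<close> neg
    by (auto simp: admissible_weights_def mult_neg_pos mult_neg_neg intro!: exI[of _ j])
qed

section \<open>Classification\<close>

definition ideal_pair ::
    "('a::euclidean_space \<Rightarrow> 'a \<Rightarrow> 'a) \<Rightarrow> ('a^'m::finite) set \<Rightarrow> ('a^'m \<Rightarrow> 'a^'m \<Rightarrow> real) \<Rightarrow> bool" where
  "ideal_pair br p ip \<longleftrightarrow> (\<exists>j. p = {X. X $ j = 0} \<and>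
     (\<exists>\<beta>::'m \<Rightarrow> real. (\<forall>i. i \<noteq> j \<longrightarrow> \<beta> i > 0) \<and>
        (\<forall>X\<in>p. \<forall>Y\<in>p. ip X Y = (\<Sum>i\<in>UNIV - {j}. \<beta> i * negkill_i br i X Y))))"

definition orthogonal_pair ::
    "('a::euclidean_space \<Rightarrow> 'a \<Rightarrow> 'a) \<Rightarrow> ('a^'m::finite) set \<Rightarrow> ('a^'m \<Rightarrow> 'a^'m \<Rightarrow> real) \<Rightarrow> bool" where
  "orthogonal_pair br p ip \<longleftrightarrow> (\<exists>\<alpha>::'m \<Rightarrow> real. (\<forall>i. \<alpha> i \<noteq> 0) \<and>
     p = {X. \<forall>Y\<in>diag_sub. (\<Sum>i\<in>UNIV. \<alpha> i * negkill_i br i X Y) = 0} \<and>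
     (\<forall>X\<in>p. \<forall>Y\<in>p. ip X Y = (\<Sum>i\<in>UNIV. \<alpha> i * negkill_i br i X Y)) \<and> admissible_weights \<alpha>)"

context lie_alg
begin

lemma reductive_compl_axis: "reductive_compl br {X::'a^'m::finite. X $ j = 0}"
  unfolding reductive_compl_def
proof (intro conjI allI ballI)
  show "subspace {X::'a^'m. X $ j = 0}" by (simp add: subspace_def)
  show "{X::'a^'m. X $ j = 0} \<inter> diag_sub = {0}"
  proof (intro equalityI subsetI)
    fix X :: "'a^'m" assume "X \<in> {X. X $ j = 0} \<inter> diag_sub"
    then have "X = diag (X $ j)" "X $ j = 0" using diag_sub_iff[of X j] by auto
    then have "X = diag 0" by metis
    then show "X \<in> {0}" by (simp add: vec_eq_iff)
  qed (simp add: subspace_0[OF subspace_diag_sub])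
  show "\<exists>A\<in>{X. X $ j = 0}. \<exists>D\<in>diag_sub. X = A + D" for X :: "'a^'m"
    by (intro bexI[of _ "X - diag (X $ j)"] bexI[of _ "diag (X $ j)"]) auto
qed simp

lemma reductive_compl_weighted:
  fixes \<alpha> :: "'m::finite \<Rightarrow> real"
  assumes S: "(\<Sum>i\<in>UNIV. \<alpha> i) \<noteq> 0"
  shows "reductive_compl br {X::'a^'m. (\<Sum>i\<in>UNIV. \<alpha> i *\<^sub>R X $ i) = 0}"
  unfolding reductive_compl_def
proof (intro conjI allI ballI)
  let ?P = "{X::'a^'m. (\<Sum>i\<in>UNIV. \<alpha> i *\<^sub>R X $ i) = 0}"
  have weighted_diag: "(\<Sum>i\<in>UNIV. \<alpha> i *\<^sub>R diag d $ i) = (\<Sum>i\<in>UNIV. \<alpha> i) *\<^sub>R d" for d :: 'a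
    by (simp add: scaleR_sum_left)
  have "(\<Sum>i\<in>UNIV. \<alpha> i *\<^sub>R (c *\<^sub>R X) $ i) = c *\<^sub>R (\<Sum>i\<in>UNIV. \<alpha> i *\<^sub>R X $ i)"
    for c and X :: "'a^'m"
    by (simp add: scaleR_sum_right scaleR_scaleR mult.commute)
  then show "subspace ?P"
    unfolding subspace_def by (simp add: scaleR_add_right sum.distrib)
  show "?P \<inter> diag_sub = {0}"
    using S weighted_diag subspace_0[OF subspace_diag_sub] by (auto simp: diag_sub_eq_range)
  fix X :: "'a^'m"
  define d where "d = (1 / (\<Sum>i\<in>UNIV. \<alpha> i)) *\<^sub>R (\<Sum>i\<in>UNIV. \<alpha> i *\<^sub>R X $ i)"
  have "(\<Sum>i\<in>UNIV. \<alpha> i *\<^sub>R (X - diag d) $ i) = (\<Sum>i\<in>UNIV. \<alpha> i *\<^sub>R X $ i) - (\<Sum>i\<in>UNIV. \<alpha> i) *\<^sub>R d"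
    by (simp add: scaleR_diff_right sum_subtractf weighted_diag[symmetric])
  also have "\<dots> = 0" using S by (simp add: d_def)
  finally show "\<exists>A\<in>?P. \<exists>D\<in>diag_sub. X = A + D"
    by (intro bexI[of _ "X - diag d"] bexI[of _ "diag d"]) auto
next
  fix Z X :: "'a^'m"
  assume "Z \<in> diag_sub" "X \<in> {X::'a^'m. (\<Sum>i\<in>UNIV. \<alpha> i *\<^sub>R X $ i) = 0}"
  then obtain z where "Z = diag z" and "(\<Sum>i\<in>UNIV. \<alpha> i *\<^sub>R X $ i) = 0"
    by (auto simp: diag_sub_eq_range)
  moreover have "(\<Sum>i\<in>UNIV. \<alpha> i *\<^sub>R br z (X $ i)) = br z (\<Sum>i\<in>UNIV. \<alpha> i *\<^sub>R X $ i)"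
    by (simp add: br_sum_right br_scale_right)
  ultimately show "prod_br br Z X \<in> {X::'a^'m. (\<Sum>i\<in>UNIV. \<alpha> i *\<^sub>R X $ i) = 0}"
    by simp
qed

end

context compact_lie_alg
begin

lemma negkill_i_eq_B: "negkill_i br i X Y = B (X$i) (Y$i)"
  unfolding negkill_i_def negkill_def killing_prod_br comp_part_def B_def
  by (simp add: if_distrib bilinear_lzero[OF bilinear_killing] cong: if_cong)

lemma orthogonal_compl_diag_eq:
  "{X::'a^'m::finite. \<forall>Y\<in>diag_sub. (\<Sum>i\<in>UNIV. \<alpha> i * negkill_i br i X Y) = 0}
     = {X. (\<Sum>i\<in>UNIV. \<alpha> i *\<^sub>R X $ i) = 0}"
proof -
  have "(\<Sum>i\<in>UNIV. \<alpha> i * negkill_i br i X (diag y)) = B (\<Sum>i\<in>UNIV. \<alpha> i *\<^sub>R X $ i) y"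
    for X :: "'a^'m" and y
    by (simp add: negkill_i_eq_B B_sum_left B_scale_left)
  then show ?thesis
    by (auto simp: diag_sub_eq_range intro: B_nondegenerate)
qed

lemma metric_rank_one:
  fixes M :: "'a^'m::finite \<Rightarrow> 'a^'m \<Rightarrow> real"
  assumes "bilinear M" and "\<And>i k x y. M (emb i x) (emb k y) = a i k * B x y"
    and rank_one: "\<And>i k. a i k = \<mu> * ((if i = k then c i else 0) - c i * c k)"
  shows "M X Y = (\<Sum>i\<in>UNIV. \<mu> * c i * B (X$i) (Y$i))
      - \<mu> * B (\<Sum>i\<in>UNIV. c i *\<^sub>R X $ i) (\<Sum>k\<in>UNIV. c k *\<^sub>R Y $ k)"
proof -
  have diag_part: "(\<Sum>k\<in>UNIV. (if i = k then c i else 0) * B (X$i) (Y$k)) = c i * B (X$i) (Y$i)"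
    for i
  proof -
    have "(\<Sum>k\<in>UNIV. (if i = k then c i else 0) * B (X$i) (Y$k))
        = (\<Sum>k\<in>UNIV. if i = k then c i * B (X$i) (Y$k) else 0)"
      by (intro sum.cong) auto
    then show ?thesis by simp
  qed
  have cross: "B (\<Sum>i\<in>UNIV. c i *\<^sub>R X $ i) (\<Sum>k\<in>UNIV. c k *\<^sub>R Y $ k)
      = (\<Sum>i\<in>UNIV. \<Sum>k\<in>UNIV. c i * c k * B (X$i) (Y$k))"
    by (simp add: bilinear_sum[OF bilinear_B] sum.cartesian_product B_scale_left B_scale_right
        mult_ac)
  have "M X Y = (\<Sum>i\<in>UNIV. \<Sum>k\<in>UNIV. \<mu> * ((if i = k then c i else 0) * B (X$i) (Y$k))
      - \<mu> * (c i * c k * B (X$i) (Y$k)))"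
    unfolding metric_expand[OF assms(1,2)] rank_one by (intro sum.cong refl) (simp add: algebra_simps)
  also have "\<dots> = \<mu> * (\<Sum>i\<in>UNIV. \<Sum>k\<in>UNIV. (if i = k then c i else 0) * B (X$i) (Y$k))
      - \<mu> * (\<Sum>i\<in>UNIV. \<Sum>k\<in>UNIV. c i * c k * B (X$i) (Y$k))"
    by (simp add: sum_subtractf sum_distrib_left)
  finally show ?thesis by (simp add: diag_part cross sum_distrib_left mult.assoc)
qed

lemma nat_red_if_ideal_pair:
  assumes gen: "generated_by br M p ip" and "ideal_pair br p ip" and "X \<in> p" "Y \<in> p"
  shows "M (prod_br br X Y) X = 0"
proof -
  obtain j \<beta> where p: "p = {X. X $ j = 0}"
    and ip: "\<And>X Y. X \<in> p \<Longrightarrow> Y \<in> p \<Longrightarrow> ip X Y = (\<Sum>i\<in>UNIV - {j}. \<beta> i * negkill_i br i X Y)"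
    using assms(2) by (auto simp: ideal_pair_def)
  have rc: "reductive_compl br p" using gen by (simp add: generated_by_def)
  have "prod_br br X Y \<in> p" using assms(3,4) p by simp
  then have "M (prod_br br X Y) X = ip (prod_br br X Y) X"
    using gen assms(3) pcomp_id[OF rc] by (simp add: generated_by_def)
  also have "\<dots> = 0"
    using ip[OF \<open>prod_br br X Y \<in> p\<close> assms(3)] by (simp add: negkill_i_eq_B B_br_self)
  finally show ?thesis .
qed

lemma nat_red_if_orthogonal_compl:
  assumes gen: "generated_by br M p ip"
    and p: "p = {X. \<forall>Y\<in>diag_sub. (\<Sum>i\<in>UNIV. \<alpha> i * negkill_i br i X Y) = 0}"
    and ip: "\<forall>X\<in>p. \<forall>Y\<in>p. ip X Y = (\<Sum>i\<in>UNIV. \<alpha> i * negkill_i br i X Y)"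
    and "X \<in> p" "Y \<in> p"
  shows "M (prod_br br X Y) X = 0"
proof -
  have rc: "reductive_compl br p" using gen by (simp add: generated_by_def)
  define Z where "Z = pcomp p (prod_br br X Y)"
  obtain d where d: "prod_br br X Y - Z = diag d"
    using pcomp_mem(2)[OF rc] by (auto simp: Z_def diag_sub_eq_range)
  have "M (prod_br br X Y) X = ip Z X"
    using gen assms(4) pcomp_id[OF rc] by (simp add: generated_by_def Z_def)
  also have "\<dots> = (\<Sum>i\<in>UNIV. \<alpha> i * B (br (X$i) (Y$i) - d) (X$i))"
  proof -
    have "Z $ i = prod_br br X Y $ i - (prod_br br X Y - Z) $ i" for i by simp
    then have "Z $ i = br (X$i) (Y$i) - d" for i by (simp add: d)
    moreover have "Z \<in> p" using pcomp_mem(1)[OF rc] by (simp add: Z_def)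
    ultimately show ?thesis using ip assms(4) by (simp add: negkill_i_eq_B)
  qed
  also have "\<dots> = - (\<Sum>i\<in>UNIV. \<alpha> i * negkill_i br i X (diag d))"
    by (simp add: B_diff_left B_br_self negkill_i_eq_B B_commute[of d] right_diff_distrib sum_subtractf
        sum_negf)
  also have "\<dots> = 0" using assms(4) p by simp
  finally show ?thesis .
qed

end

context compact_simple_lie_alg
begin

context
  fixes M :: "'a^'m::finite \<Rightarrow> 'a^'m \<Rightarrow> real" and a :: "'m \<Rightarrow> 'm \<Rightarrow> real" and c :: "'m \<Rightarrow> real"
  assumes im: "inv_metric br M" and blocks: "\<And>i k x y. M (emb i x) (emb k y) = a i k * B x y"
    and diag_pos: "\<And>i. a i i > 0"
    and rel: "\<And>p q. p \<noteq> q \<Longrightarrow> (1 - c p) * a p q + c q * a p p = 0"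
begin

lemma ideal_pair_if_coeff_one:
  assumes "c j = 1"
  shows "generated_by br M {X. X $ j = 0} M \<and> ideal_pair br {X. X $ j = 0} M"
proof -
  have c_zero: "c q = 0" if "q \<noteq> j" for q
    using rel[of j q] that \<open>c j = 1\<close> diag_pos[of j] by simp
  have a_zero: "a i k = 0" if "i \<noteq> k" "i \<noteq> j" "k \<noteq> j" for i k
    using rel[OF that(1)] c_zero that by simp
  have "M X Y = (\<Sum>i\<in>UNIV - {j}. a i i * negkill_i br i X Y)" if "X $ j = 0" "Y $ j = 0" for X Y
  proof -
    have off: "a i k * B (X$i) (Y$k) = 0" if "k \<noteq> i" for i k
      using that \<open>X $ j = 0\<close> \<open>Y $ j = 0\<close> a_zero[of i k] by (cases "i = j \<or> k = j") auto
    have "(\<Sum>k\<in>UNIV. a i k * B (X$i) (Y$k)) = a i i * B (X$i) (Y$i)" for i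
      using off[of _ i] by (simp add: sum.remove[of UNIV i] sum.neutral)
    then have "M X Y = (\<Sum>i\<in>UNIV. a i i * B (X$i) (Y$i))"
      by (simp add: metric_expand[OF inv_metric_bilinear[OF im] blocks])
    also have "\<dots> = (\<Sum>i\<in>UNIV - {j}. a i i * B (X$i) (Y$i))"
      using \<open>X $ j = 0\<close> by (simp add: sum.remove[of UNIV j])
    finally show ?thesis by (simp add: negkill_i_eq_B)
  qed
  then show ?thesis
    using generated_by_self[OF im reductive_compl_axis] diag_pos
    by (auto simp: ideal_pair_def intro!: exI[of _ "\<lambda>i. a i i"])
qed

lemma orthogonal_pair_if_no_coeff_one:
  assumes sum_c: "(\<Sum>i\<in>UNIV. c i) = 1" and not_one: "\<And>j. c j \<noteq> 1"
  shows "\<exists>p. generated_by br M p M \<and> orthogonal_pair br p M"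
proof -
  obtain \<mu> where "\<mu> \<noteq> 0" and c_nonzero: "\<And>i. c i \<noteq> 0"
    and rank_one: "\<And>i k. a i k = \<mu> * ((if i = k then c i else 0) - c i * c k)"
    using blocks_rank_one[OF blocks_commute[OF im blocks] diag_pos rel sum_c not_one] by blast
  define \<alpha> where "\<alpha> i = \<mu> * c i" for i
  define P where "P = {X::'a^'m. \<forall>Y\<in>diag_sub. (\<Sum>i\<in>UNIV. \<alpha> i * negkill_i br i X Y) = 0}"
  have P: "P = {X. \<mu> *\<^sub>R (\<Sum>i\<in>UNIV. c i *\<^sub>R X $ i) = 0}"
    by (simp add: P_def orthogonal_compl_diag_eq \<alpha>_def scaleR_sum_right)
  have "(\<Sum>i\<in>UNIV. \<alpha> i) = \<mu>" using sum_c by (simp add: \<alpha>_def sum_distrib_left[symmetric])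
  then have "generated_by br M P M"
    using generated_by_self[OF im reductive_compl_weighted[of \<alpha>]] \<open>\<mu> \<noteq> 0\<close>
    by (simp add: P_def orthogonal_compl_diag_eq)
  moreover have "\<forall>X\<in>P. \<forall>Y\<in>P. M X Y = (\<Sum>i\<in>UNIV. \<alpha> i * negkill_i br i X Y)"
    using \<open>\<mu> \<noteq> 0\<close>
    by (simp add: P metric_rank_one[OF inv_metric_bilinear[OF im] blocks rank_one] \<alpha>_def
        negkill_i_eq_B)
  moreover have "admissible_weights \<alpha>"
    unfolding \<alpha>_def using coeff_form_pos[OF im blocks]
    by (intro admissible_weights_rank_one[OF rank_one \<open>\<mu> \<noteq> 0\<close> c_nonzero sum_c diag_pos]) blast
  moreover have "\<forall>i. \<alpha> i \<noteq> 0" using \<open>\<mu> \<noteq> 0\<close> c_nonzero by (simp add: \<alpha>_def)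
  ultimately show ?thesis
    unfolding orthogonal_pair_def using P_def by blast
qed

end

lemma pair_if_nat_red:
  fixes M :: "'a^'m::finite \<Rightarrow> 'a^'m \<Rightarrow> real"
  assumes card: "CARD('m) \<ge> 2" and im: "inv_metric br M" and gen: "generated_by br M p ip"
    and nat_red: "\<forall>X\<in>p. \<forall>Y\<in>p. M (prod_br br X Y) X = 0"
  shows "\<exists>p ip. generated_by br M p ip \<and> (ideal_pair br p ip \<or> orthogonal_pair br p ip)"
proof -
  have rc: "reductive_compl br p" using gen by (simp add: generated_by_def)
  obtain a where blocks: "\<And>i k x y. M (emb i x) (emb k y) = a i k * B x y"
    using inv_metric_blocks[OF im] by blast
  obtain c where pc: "\<And>V. pcomp p V = V - diag (\<Sum>i\<in>UNIV. c i *\<^sub>R V $ i)"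
    and sum_c: "(\<Sum>i\<in>UNIV. c i) = 1"
    using reductive_compl_coeffs[OF rc] by blast
  have diag_pos: "a i i > 0" for i
  proof -
    obtain k where "k \<noteq> i" using exists_other_index[OF card] by blast
    then have "delta i i \<noteq> delta i k" by (simp add: delta_def)
    then show ?thesis using coeff_form_pos[OF im blocks] coeff_form_delta by metis
  qed
  have rel: "(1 - c p') * a p' q + c q * a p' p' = 0" if "p' \<noteq> q" for p' q
    using coeff_relation_of_nat_red[OF blocks_commute[OF im blocks] blocks_row_sum[OF im blocks] that
        coeff_form_nat_red[OF im blocks rc pc]] nat_red by blast
  show ?thesis
  proof (cases "\<exists>j. c j = 1")
    case True
    then show ?thesis using ideal_pair_if_coeff_one[OF im blocks diag_pos rel] by blast
  next
    case False
    then show ?thesis using orthogonal_pair_if_no_coeff_one[OF im blocks diag_pos rel sum_c] by blast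
  qed
qed

lemma naturally_reductive_iff_pair:
  fixes M :: "'a^'m::finite \<Rightarrow> 'a^'m \<Rightarrow> real"
  assumes "CARD('m) \<ge> 2" and "inv_metric br M"
  shows "naturally_reductive br M \<longleftrightarrow>
    (\<exists>p ip. generated_by br M p ip \<and> (ideal_pair br p ip \<or> orthogonal_pair br p ip))"
proof
  assume "naturally_reductive br M"
  then show "\<exists>p ip. generated_by br M p ip \<and> (ideal_pair br p ip \<or> orthogonal_pair br p ip)"
    using pair_if_nat_red[OF assms] by (auto simp: naturally_reductive_iff_metric)
next
  assume "\<exists>p ip. generated_by br M p ip \<and> (ideal_pair br p ip \<or> orthogonal_pair br p ip)"
  then obtain p ip where gen: "generated_by br M p ip"
    and pair: "ideal_pair br p ip \<or> orthogonal_pair br p ip" by blast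
  have "M (prod_br br X Y) X = 0" if "X \<in> p" "Y \<in> p" for X Y
    using pair
  proof
    assume "ideal_pair br p ip"
    then show ?thesis using nat_red_if_ideal_pair[OF gen _ that] by blast
  next
    assume "orthogonal_pair br p ip"
    then obtain \<alpha> where "p = {X. \<forall>Y\<in>diag_sub. (\<Sum>i\<in>UNIV. \<alpha> i * negkill_i br i X Y) = 0}"
      and "\<forall>X\<in>p. \<forall>Y\<in>p. ip X Y = (\<Sum>i\<in>UNIV. \<alpha> i * negkill_i br i X Y)"
      by (auto simp: orthogonal_pair_def)
    then show ?thesis by (rule nat_red_if_orthogonal_compl[OF gen _ _ that])
  qed
  then show "naturally_reductive br M"
    unfolding naturally_reductive_iff_metric using gen by blast
qed

end

theorem theorem1:
  fixes br :: "'f::euclidean_space \<Rightarrow> 'f \<Rightarrow> 'f"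
    and M :: "'f^'m::finite \<Rightarrow> 'f^'m \<Rightarrow> real"
  assumes "simple_lie_algebra br" and "compact_lie_algebra br"
    and "CARD('m) \<ge> 2"
    and "inv_metric br M"
  shows "naturally_reductive br M \<longleftrightarrow>
    (\<exists>p ip. generated_by br M p ip \<and>
      ((\<exists>j. p = {X. X $ j = 0} \<and>
          (\<exists>\<beta>::'m \<Rightarrow> real. (\<forall>i. i \<noteq> j \<longrightarrow> \<beta> i > 0) \<and>
             (\<forall>X\<in>p. \<forall>Y\<in>p. ip X Y = (\<Sum>i\<in>UNIV - {j}. \<beta> i * negkill_i br i X Y))))
       \<or>
       (\<exists>\<alpha>::'m \<Rightarrow> real. (\<forall>i. \<alpha> i \<noteq> 0) \<and>
          p = {X. \<forall>Y\<in>diag_sub. (\<Sum>i\<in>UNIV. \<alpha> i * negkill_i br i X Y) = 0} \<and>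
          (\<forall>X\<in>p. \<forall>Y\<in>p. ip X Y = (\<Sum>i\<in>UNIV. \<alpha> i * negkill_i br i X Y)) \<and>
          ((\<forall>i. \<alpha> i > 0) \<or>
           (\<exists>j. \<alpha> j < 0 \<and> (\<forall>i. i \<noteq> j \<longrightarrow> \<alpha> i > 0) \<and> (\<Sum>i\<in>UNIV. \<alpha> i) < 0)))))"
proof -
  interpret compact_simple_lie_alg br
    using assms(1,2) by unfold_locales (auto simp: compact_lie_algebra_def)
  show ?thesis
    using naturally_reductive_iff_pair[OF assms(3,4)]
    unfolding ideal_pair_def orthogonal_pair_def admissible_weights_def .
qed

end
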